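(* Let $X_8=E_8/K_8$ be a semi-equivelar toroidal map of type $[3^1,12^2]$, and let $X_8^\#=E_8^\#/K_8$ be its associated equivelar map of type $[3^6]$. Then for every positive integer $m_8$, $X_8^\#$ has exactly $m_8$ edge orbits if and only if $X_8$ has exactly $2m_8$ edge orbits.
   Context: $E_8$ is the semi-equivelar tiling of the plane of type $[3^1,12^2]$ (each vertex surrounded by one triangle and two regular 12-gons). $K_8$ is a discrete subgroup of ${\rm Aut}(E_8)$ acting without fixed points and consisting of translations, with rank-2 translation lattice, so that $X_8=E_8/K_8$ is a map on the torus. The associated equivelar tiling $E_8^\#$ is the tiling of type $[3^6]$ whose vertices are the centres of the 12-gons of $E_8$, two centres joined when at minimal distance; $X_8^\#:=E_8^\#/K_8$. Edge orbits of a map are the orbits of its automorphism group on its set of edges. *)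

theory Defs
  imports Complex_Main
begin

text \<open>The 12-gons of E_8 are regular with circumradius 1; their centres form the
  triangular lattice Lam generated by dd and dd*omega, where dd = 2 cos(pi/12)
  is the distance between centres of adjacent 12-gons (sharing an edge).
  The 12-gon with centre c has vertices c + cis((2k+1) pi/12), k = 0..11.
  The triangles of E_8 fill the remaining holes; every edge of E_8 is a side of
  some 12-gon.\<close>

definition omega6 :: complex where
  "omega6 = cis (pi / 3)"

definition dd :: real where
  "dd = 2 * cos (pi / 12)"

text \<open>Centres of the 12-gons of E_8 = vertex set of E_8^#.\<close>
definition Lam :: "complex set" where
  "Lam = {complex_of_real dd * (of_int a + of_int b * omega6) | a b :: int. True}"

definition V8 :: "complex set" where
  "V8 = {c + cis ((2 * real k + 1) * pi / 12) | c k. c \<in> Lam \<and> k < 12}"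

definition Edges8 :: "complex set set" where
  "Edges8 = {{c + cis ((2 * real k + 1) * pi / 12), c + cis ((2 * real k + 3) * pi / 12)}
              | c k. c \<in> Lam \<and> k < 12}"

definition EdgesS :: "complex set set" where
  "EdgesS = {{x, y} | x y. x \<in> Lam \<and> y \<in> Lam \<and> dist x y = dd}"

text \<open>Automorphism group of a tiling of the plane with vertex set P: the isometries
  of the plane preserving the tiling (equivalently its vertex set).\<close>
definition isometry :: "(complex \<Rightarrow> complex) \<Rightarrow> bool" where
  "isometry g \<longleftrightarrow> (\<forall>z w. dist (g z) (g w) = dist z w)"

definition AutT :: "complex set \<Rightarrow> (complex \<Rightarrow> complex) set" where
  "AutT P = {g. isometry g \<and> g ` P = P}"

definition Aut8 :: "(complex \<Rightarrow> complex) set" where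
  "Aut8 = AutT V8"

definition AutS :: "(complex \<Rightarrow> complex) set" where
  "AutS = AutT Lam"

definition normaliser :: "(complex \<Rightarrow> complex) set \<Rightarrow> (complex \<Rightarrow> complex) set
    \<Rightarrow> (complex \<Rightarrow> complex) set" where
  "normaliser G K = {g \<in> G. (\<lambda>k. g \<circ> k) ` K = (\<lambda>k. k \<circ> g) ` K}"

definition translation_lattice_group :: "(complex \<Rightarrow> complex) set \<Rightarrow> (complex \<Rightarrow> complex) set \<Rightarrow> bool" where
  "translation_lattice_group G K \<longleftrightarrow>
     K \<subseteq> G \<and> id \<in> K \<and>
     (\<forall>k\<in>K. \<exists>w. k = (\<lambda>z. z + w)) \<and>
     (\<forall>k1\<in>K. \<forall>k2\<in>K. k1 \<circ> k2 \<in> K) \<and>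
     (\<forall>w. (\<lambda>z. z + w) \<in> K \<longrightarrow> (\<lambda>z. z - w) \<in> K) \<and>
     (\<exists>e>0. \<forall>w. (\<lambda>z. z + w) \<in> K \<and> w \<noteq> 0 \<longrightarrow> e \<le> norm w) \<and>
     (\<exists>a b. (\<lambda>z. z + a) \<in> K \<and> (\<lambda>z. z + b) \<in> K \<and> Im (a * cnj b) \<noteq> 0)"

text \<open>Aut(E/K) = N_G(K)/K; since K \<subseteq> N_G(K), the orbits of
  Aut(E/K) on the edges of E/K (= K-orbits of edges of E) correspond bijectively to
  the orbits of N_G(K) on the edges of E.\<close>
definition edge_orbits :: "(complex \<Rightarrow> complex) set \<Rightarrow> complex set set
    \<Rightarrow> (complex \<Rightarrow> complex) set \<Rightarrow> complex set set set" where
  "edge_orbits G Ed K = (\<lambda>e. (\<lambda>g. g ` e) ` normaliser G K) ` Ed"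

definition num_edge_orbits_quotient :: "(complex \<Rightarrow> complex) set \<Rightarrow> complex set set
    \<Rightarrow> (complex \<Rightarrow> complex) set \<Rightarrow> nat" where
  "num_edge_orbits_quotient G Ed K = card (edge_orbits G Ed K)"

end

theory Submission
  imports Defs "HOL-Analysis.Cartesian_Space"
begin

text \<open>
  Both tilings have the same symmetry group: an isometry preserving the lattice \<open>Lam\<close> of
  12-gon centres, or the vertex set \<open>V8\<close> of \<open>E\<^sub>8\<close>, has the form
  \<open>z \<mapsto> \<zeta>^(4t) z + b\<close> or \<open>z \<mapsto> \<zeta>^(4t) (cnj z) + b\<close> with \<open>\<zeta> = cis (pi / 12)\<close>
  and \<open>b \<in> Lam\<close>.  For \<open>V8\<close> the point is that a translation preserving \<open>V8\<close> lies in
  \<open>Lam\<close>: every other candidate moves some vertex too close to a 12-gon centre.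
  So the normaliser of \<open>K\<close> is the same for both maps, namely the symmetries whose linear part
  preserves the translation lattice \<open>L\<close> of \<open>K\<close>.

  An edge of \<open>E\<^sub>8\<close> is a side of a 12-gon whose midpoint lies in direction \<open>\<zeta>^n\<close> from
  the centre (\<open>n\<close> even); an edge of \<open>E\<^sub>8\<^sup>#\<close> joins a centre to the centre in direction
  \<open>\<zeta>^n\<close> (\<open>4 dvd n\<close>).  In both cases two edges lie in one orbit iff their directions are
  related by the linear part of an element of the normaliser; since \<open>L = - L\<close>, reversing an
  edge costs nothing.  Hence the sides with \<open>4 dvd n\<close> have the orbit structure of the edges of
  \<open>E\<^sub>8\<^sup>#\<close>, and so do the remaining sides after a quarter turn, while the two kinds of
  sides are never related.
\<close>

section \<open>Powers of \<open>\<zeta>\<close>\<close>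

definition cis12 :: "int \<Rightarrow> complex" where
  "cis12 n = cis (of_int n * pi / 12)"

lemma cis12_add: "cis12 (a + b) = cis12 a * cis12 b"
  unfolding cis12_def cis_mult by (simp add: add_divide_distrib distrib_right)

lemma cnj_cis12: "cnj (cis12 a) = cis12 (- a)"
  unfolding cis12_def cis_cnj by simp

lemma norm_cis12 [simp]: "cmod (cis12 a) = 1"
  unfolding cis12_def by simp

lemma cis12_neq_0 [simp]: "cis12 a \<noteq> 0"
  unfolding cis12_def by simp

lemma cis12_0 [simp]: "cis12 0 = 1"
  unfolding cis12_def by simp

lemma cis12_add12: "cis12 (a + 12) = - cis12 a"
  unfolding cis12_add by (simp add: cis12_def)

lemma cis12_eq_1_iff: "cis12 a = 1 \<longleftrightarrow> a mod 24 = 0"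
proof
  assume "cis12 a = 1"
  then have "cos (of_int a * pi / 12) = 1"
    unfolding cis12_def by (metis cis.sel(1) one_complex.sel(1))
  then obtain n :: int where "of_int a * pi / 12 = of_int n * 2 * pi"
    by (auto simp: cos_one_2pi_int)
  then have "of_int a = (of_int (24 * n) :: real)" by (simp add: field_simps)
  then show "a mod 24 = 0" by (simp only: of_int_eq_iff) simp
next
  assume "a mod 24 = 0"
  then obtain n where "a = 24 * n" by auto
  then have "of_int a * pi / 12 = 2 * pi * of_int n" by simp
  then show "cis12 a = 1" unfolding cis12_def by (metis cis_multiple_2pi Ints_of_int)
qed

lemma cis12_eq_iff: "cis12 a = cis12 b \<longleftrightarrow> a mod 24 = b mod 24"
proof -
  have "cis12 a = cis12 (a - b) * cis12 b" by (simp flip: cis12_add)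
  then have "cis12 a = cis12 b \<longleftrightarrow> cis12 (a - b) = 1"
    by (metis mult_cancel_right2 norm_cis12 norm_zero zero_neq_one)
  then show ?thesis by (simp add: cis12_eq_1_iff mod_eq_dvd_iff dvd_eq_mod_eq_0)
qed

lemma cis12_even_mod12: "cis12 (2 * k + c) = cis12 (2 * (k mod 12) + c)"
proof -
  have "2 * k + c - (2 * (k mod 12) + c) = 24 * (k div 12)"
    using div_mult_mod_eq[of k 12] by linarith
  then show ?thesis unfolding cis12_eq_iff mod_eq_dvd_iff by simp
qed

lemma cis12_4: "cis12 4 = omega6"
  unfolding cis12_def omega6_def by simp

lemma omega6_eq: "omega6 = Complex (1 / 2) (sqrt 3 / 2)"
  unfolding omega6_def by (simp add: cis.ctr cos_60 sin_60)

lemma omega6_sq: "omega6 * omega6 = omega6 - 1"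
  unfolding omega6_eq by (simp add: complex_eq_iff field_simps)

lemma cnj_omega6: "cnj omega6 = 1 - omega6"
  unfolding omega6_eq by (simp add: complex_eq_iff)

lemma dd_eq_cis12: "complex_of_real dd = cis12 1 + cis12 (- 1)"
  unfolding dd_def cis12_def by (simp add: complex_eq_iff cis.ctr)

lemma dd_sq: "dd\<^sup>2 = 2 + sqrt 3"
proof -
  have "sqrt 3 / 2 = cos (2 * (pi / 12))" by (simp add: cos_30)
  also have "\<dots> = 2 * (cos (pi / 12))\<^sup>2 - 1" by (rule cos_double_cos)
  finally show ?thesis unfolding dd_def by (simp add: power_mult_distrib)
qed

lemma dd_pos: "dd > 0"
  unfolding dd_def by (simp add: cos_gt_zero)

lemma sqrt3_bounds: "17 / 10 < sqrt 3" "sqrt 3 < 7 / 4"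
proof -
  have "sqrt ((17 / 10)\<^sup>2) < sqrt 3" "sqrt 3 < sqrt ((7 / 4)\<^sup>2)"
    by (simp_all only: real_sqrt_less_iff) (simp_all add: power2_eq_square)
  then show "17 / 10 < sqrt 3" "sqrt 3 < 7 / 4" by simp_all
qed

lemma dd_ge: "19 / 10 \<le> dd"
proof (rule ccontr)
  assume "\<not> 19 / 10 \<le> dd"
  then have "dd\<^sup>2 < (19 / 10)\<^sup>2" using dd_pos by (intro power_strict_mono) auto
  then show False using dd_sq sqrt3_bounds by (simp add: power2_eq_square)
qed

lemma norm_cis12_sum3_sq:
  "(cmod (cis12 a + cis12 b + cis12 c))\<^sup>2 =
     3 + 2 * (Re (cis12 (a - b)) + Re (cis12 (a - c)) + Re (cis12 (b - c)))"
proof -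
  define x where "x = of_int a * pi / 12"
  define y where "y = of_int b * pi / 12"
  define z where "z = of_int c * pi / 12"
  have "Re (cis12 (a - b)) = cos (x - y)" "Re (cis12 (a - c)) = cos (x - z)"
    "Re (cis12 (b - c)) = cos (y - z)"
    unfolding cis12_def x_def y_def z_def by (simp_all add: diff_divide_distrib left_diff_distrib)
  moreover have "(cmod (cis12 a + cis12 b + cis12 c))\<^sup>2 =
      (cos x + cos y + cos z)\<^sup>2 + (sin x + sin y + sin z)\<^sup>2"
    unfolding cmod_power2 cis12_def x_def y_def z_def by simp
  moreover have "\<dots> = 3 + 2 * (cos (x - y) + cos (x - z) + cos (y - z))"
    using sin_cos_squared_add3[of x] sin_cos_squared_add3[of y] sin_cos_squared_add3[of z]
    unfolding cos_diff power2_eq_square by algebra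
  ultimately show ?thesis by simp
qed

lemma Re_cis12_uminus: "Re (cis12 (- n)) = Re (cis12 n)"
  unfolding cis12_def by simp

lemma Re_cis12_values:
  "Re (cis12 6) = 0" "Re (cis12 8) = - 1 / 2" "Re (cis12 10) = - sqrt 3 / 2"
  "Re (cis12 14) = - sqrt 3 / 2" "Re (cis12 16) = - 1 / 2" "Re (cis12 18) = 0"
proof -
  have Re_cis12: "Re (cis12 n) = cos (of_int n * pi / 12)" for n unfolding cis12_def by simp
  have "Re (cis12 2) = sqrt 3 / 2" "Re (cis12 4) = 1 / 2" "Re (cis12 6) = 0"
    "Re (cis12 8) = - 1 / 2" "Re (cis12 10) = - sqrt 3 / 2"
    unfolding Re_cis12 using cos_30 cos_60 cos_pi_half
      cos_pi_minus[of "pi / 3"] cos_pi_minus[of "pi / 6"] by (simp_all add: field_simps)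
  then show "Re (cis12 6) = 0" "Re (cis12 8) = - 1 / 2" "Re (cis12 10) = - sqrt 3 / 2"
    "Re (cis12 14) = - sqrt 3 / 2" "Re (cis12 16) = - 1 / 2" "Re (cis12 18) = 0"
    using cis12_add12[of 2] cis12_add12[of 4] cis12_add12[of 6] by simp_all
qed

section \<open>The lattice of 12-gon centres\<close>

definition eisenstein :: "complex set" where
  "eisenstein = {of_int a + of_int b * omega6 | a b :: int. True}"

lemma Lam_eq_image: "Lam = (\<lambda>z. complex_of_real dd * z) ` eisenstein"
  unfolding Lam_def eisenstein_def by blast

lemma eisenstein_1 [simp]: "1 \<in> eisenstein"
  unfolding eisenstein_def by (rule CollectI, rule exI[of _ 1], rule exI[of _ 0]) simp

lemma eisenstein_omega6 [simp]: "omega6 \<in> eisenstein"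
  unfolding eisenstein_def by (rule CollectI, rule exI[of _ 0], rule exI[of _ 1]) simp

lemma eisenstein_add: "x \<in> eisenstein \<Longrightarrow> y \<in> eisenstein \<Longrightarrow> x + y \<in> eisenstein"
proof -
  assume "x \<in> eisenstein" "y \<in> eisenstein"
  then obtain a b c d :: int where "x = of_int a + of_int b * omega6" "y = of_int c + of_int d * omega6"
    unfolding eisenstein_def by blast
  then have "x + y = of_int (a + c) + of_int (b + d) * omega6" by (simp add: algebra_simps)
  then show ?thesis unfolding eisenstein_def by blast
qed

lemma eisenstein_uminus: "x \<in> eisenstein \<Longrightarrow> - x \<in> eisenstein"
proof -
  assume "x \<in> eisenstein"
  then obtain a b :: int where "x = of_int a + of_int b * omega6"
    unfolding eisenstein_def by blast
  then have "- x = of_int (- a) + of_int (- b) * omega6" by simp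
  then show ?thesis unfolding eisenstein_def by blast
qed

lemma eisenstein_mult: "x \<in> eisenstein \<Longrightarrow> y \<in> eisenstein \<Longrightarrow> x * y \<in> eisenstein"
proof -
  assume "x \<in> eisenstein" "y \<in> eisenstein"
  then obtain a b c d :: int where "x = of_int a + of_int b * omega6" "y = of_int c + of_int d * omega6"
    unfolding eisenstein_def by blast
  then have "x * y = of_int (a * c - b * d) + of_int (a * d + b * c + b * d) * omega6"
    using omega6_sq by (simp add: algebra_simps) algebra
  then show ?thesis unfolding eisenstein_def by blast
qed

lemma eisenstein_cnj: "x \<in> eisenstein \<Longrightarrow> cnj x \<in> eisenstein"
proof -
  assume "x \<in> eisenstein"
  then obtain a b :: int where "x = of_int a + of_int b * omega6"
    unfolding eisenstein_def by blast
  then have "cnj x = of_int (a + b) + of_int (- b) * omega6"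
    by (simp add: cnj_omega6 algebra_simps)
  then show ?thesis unfolding eisenstein_def by blast
qed

lemma cis12_mult4_in_eisenstein: "cis12 (4 * r) \<in> eisenstein"
proof (induction r rule: int_induct[where k = 0])
  case (step1 i)
  have "cis12 (4 * (i + 1)) = cis12 (4 * i) * omega6"
    by (simp add: distrib_left cis12_add cis12_4)
  then show ?case using step1.IH by (simp add: eisenstein_mult)
next
  case (step2 i)
  have "cis12 (4 * (i - 1)) = cis12 (4 * i) * cnj omega6"
    using cis12_add[of "4 * i" "- 4"] by (simp add: right_diff_distrib cnj_cis12 cis12_4[symmetric])
  then show ?case using step2.IH by (simp add: eisenstein_mult eisenstein_cnj)
qed simp

lemma norm_eisenstein_sq: "(cmod (of_int a + of_int b * omega6))\<^sup>2 = of_int (a\<^sup>2 + a * b + b\<^sup>2)"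
  unfolding omega6_eq cmod_power2 by (simp add: power2_eq_square algebra_simps)

lemma eisenstein_form_pos: "(a :: int) \<noteq> 0 \<or> b \<noteq> 0 \<Longrightarrow> 1 \<le> a\<^sup>2 + a * b + b\<^sup>2"
proof -
  assume "a \<noteq> 0 \<or> b \<noteq> 0"
  then have "0 < (2 * a + b)\<^sup>2 + 3 * b\<^sup>2" by (cases "b = 0") (simp_all add: add_nonneg_pos)
  moreover have "4 * (a\<^sup>2 + a * b + b\<^sup>2) = (2 * a + b)\<^sup>2 + 3 * b\<^sup>2"
    by (simp add: power2_eq_square algebra_simps)
  ultimately have "0 < 4 * (a\<^sup>2 + a * b + b\<^sup>2)" by simp
  then show ?thesis by simp
qed

lemma eisenstein_form_eq_1:
  assumes "(a :: int)\<^sup>2 + a * b + b\<^sup>2 = 1"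
  shows "(a, b) \<in> {(1, 0), (0, 1), (-1, 1), (-1, 0), (0, -1), (1, -1)}"
proof -
  have "4 = (2 * a + b)\<^sup>2 + 3 * b\<^sup>2" "4 = (2 * b + a)\<^sup>2 + 3 * a\<^sup>2"
    using assms by (simp_all add: power2_eq_square algebra_simps)
  then have "b\<^sup>2 \<le> 1" "a\<^sup>2 \<le> 1"
    using zero_le_power2[of "2 * a + b"] zero_le_power2[of "2 * b + a"] by linarith+
  then have "a \<in> {-1, 0, 1}" "b \<in> {-1, 0, 1}" by (auto simp: abs_square_le_1)
  with assms show ?thesis by auto
qed

lemma eisenstein_norm_ge_1: "x \<in> eisenstein \<Longrightarrow> x \<noteq> 0 \<Longrightarrow> 1 \<le> cmod x"
proof -
  assume "x \<in> eisenstein" "x \<noteq> 0"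
  then obtain a b :: int where x: "x = of_int a + of_int b * omega6"
    unfolding eisenstein_def by blast
  with \<open>x \<noteq> 0\<close> have "a \<noteq> 0 \<or> b \<noteq> 0" by auto
  then have "1 \<le> (cmod x)\<^sup>2" unfolding x norm_eisenstein_sq
    using eisenstein_form_pos by (metis of_int_1 of_int_le_iff)
  then show ?thesis using abs_le_square_iff[of 1 "cmod x"] by simp
qed

lemma eisenstein_unit: "x \<in> eisenstein \<Longrightarrow> cmod x = 1 \<Longrightarrow> \<exists>r. x = cis12 (4 * r)"
proof -
  assume "x \<in> eisenstein" "cmod x = 1"
  then obtain a b :: int where x: "x = of_int a + of_int b * omega6"
    unfolding eisenstein_def by blast
  with \<open>cmod x = 1\<close> have "of_int (a\<^sup>2 + a * b + b\<^sup>2) = (1 :: real)"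
    using norm_eisenstein_sq[of a b] by simp
  then have "a\<^sup>2 + a * b + b\<^sup>2 = 1" by (simp only: of_int_eq_1_iff)
  then have ab: "(a, b) \<in> {(1, 0), (0, 1), (-1, 1), (-1, 0), (0, -1), (1, -1)}"
    by (rule eisenstein_form_eq_1)
  have "cis12 8 = omega6 - 1" using cis12_add[of 4 4] by (simp add: cis12_4 omega6_sq)
  moreover have "cis12 12 = -1" "cis12 16 = - omega6" "cis12 20 = 1 - omega6"
    using cis12_add12[of 0] cis12_add12[of 4] cis12_add12[of 8] \<open>cis12 8 = omega6 - 1\<close>
    by (simp_all add: cis12_4)
  ultimately have "x \<in> (\<lambda>r. cis12 (4 * r)) ` {0, 1, 2, 3, 4, 5}" using ab by (auto simp: x cis12_4)
  then show ?thesis by blast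
qed

lemma Lam_iff: "x \<in> Lam \<longleftrightarrow> x / complex_of_real dd \<in> eisenstein"
proof -
  have dd: "complex_of_real dd \<noteq> 0" using dd_pos by simp
  show ?thesis
  proof
    assume "x \<in> Lam"
    then obtain z where "z \<in> eisenstein" "x = complex_of_real dd * z" unfolding Lam_eq_image by blast
    with dd show "x / complex_of_real dd \<in> eisenstein" by simp
  next
    assume "x / complex_of_real dd \<in> eisenstein"
    moreover have "x = complex_of_real dd * (x / complex_of_real dd)" using dd by simp
    ultimately show "x \<in> Lam" unfolding Lam_eq_image by (rule rev_image_eqI)
  qed
qed

lemma Lam_0 [simp]: "0 \<in> Lam"
  unfolding Lam_def by (intro CollectI exI[of _ 0]) simp

lemma dd_in_Lam [simp]: "complex_of_real dd \<in> Lam"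
  unfolding Lam_iff using dd_pos by simp

lemma Lam_add: "x \<in> Lam \<Longrightarrow> y \<in> Lam \<Longrightarrow> x + y \<in> Lam"
  unfolding Lam_iff add_divide_distrib by (rule eisenstein_add)

lemma Lam_uminus: "x \<in> Lam \<Longrightarrow> - x \<in> Lam"
  unfolding Lam_iff minus_divide_left[symmetric] by (rule eisenstein_uminus)

lemma Lam_diff: "x \<in> Lam \<Longrightarrow> y \<in> Lam \<Longrightarrow> x - y \<in> Lam"
  unfolding diff_conv_add_uminus by (intro Lam_add Lam_uminus)

lemma Lam_mult: "z \<in> eisenstein \<Longrightarrow> x \<in> Lam \<Longrightarrow> z * x \<in> Lam"
  unfolding Lam_iff times_divide_eq_right[symmetric] by (rule eisenstein_mult)

lemma Lam_cnj: "x \<in> Lam \<Longrightarrow> cnj x \<in> Lam"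
  unfolding Lam_iff using eisenstein_cnj by (metis complex_cnj_divide complex_cnj_complex_of_real)

lemma Lam_norm_ge: "x \<in> Lam \<Longrightarrow> x \<noteq> 0 \<Longrightarrow> dd \<le> cmod x"
proof -
  assume "x \<in> Lam" "x \<noteq> 0"
  then have "1 \<le> cmod (x / complex_of_real dd)"
    using dd_pos by (intro eisenstein_norm_ge_1) (simp_all add: Lam_iff)
  then show ?thesis using dd_pos by (simp add: norm_divide le_divide_eq)
qed

lemma Lam_norm_eq_dd: "x \<in> Lam \<Longrightarrow> cmod x = dd \<Longrightarrow> \<exists>r. x = complex_of_real dd * cis12 (4 * r)"
proof -
  assume "x \<in> Lam" "cmod x = dd"
  then have "x / complex_of_real dd \<in> eisenstein" "cmod (x / complex_of_real dd) = 1"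
    using dd_pos by (simp_all add: Lam_iff norm_divide)
  then obtain r where "x / complex_of_real dd = cis12 (4 * r)" using eisenstein_unit by blast
  then show ?thesis using dd_pos by (auto simp: field_simps)
qed

section \<open>Isometries of the plane\<close>

lemma linear_isometry_complex:
  fixes f :: "complex \<Rightarrow> complex"
  assumes "linear f" and dist_f: "\<And>x y. dist (f x) (f y) = dist x y"
  shows "f = (\<lambda>z. f 1 * z) \<or> f = (\<lambda>z. f 1 * cnj z)"
proof -
  define p where "p = f 1"
  define u where "u = f \<i> * cnj p"
  have f0: "f 0 = 0" using \<open>linear f\<close> by (rule linear_0)
  have np: "cmod p = 1" and nu: "cmod u = 1"
    using dist_f[of 1 0] dist_f[of \<i> 0] unfolding p_def u_def f0 by (simp_all add: dist_norm norm_mult)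
  have "p * cnj p = 1" using np by (metis complex_norm_square mult.commute of_real_1 power_one)
  then have fi: "f \<i> = u * p" unfolding u_def by (metis mult.assoc mult.commute mult_1_right)
  \<comment> \<open>\<open>f 1\<close> and \<open>f \<i>\<close> are unit vectors at distance \<open>sqrt 2\<close>, so \<open>f \<i> = \<plusminus>\<i> * f 1\<close>\<close>
  have "cmod (1 - u) = cmod ((1 - u) * p)" using np by (simp add: norm_mult)
  also have "(1 - u) * p = f 1 - f \<i>" unfolding fi by (simp add: p_def algebra_simps)
  also have "cmod (f 1 - f \<i>) = cmod (1 - \<i>)" using dist_f[of 1 \<i>] by (simp add: dist_norm)
  finally have "(Re (1 - u))\<^sup>2 + (Im (1 - u))\<^sup>2 = 2" by (simp add: cmod_def)
  moreover have "(Re u)\<^sup>2 + (Im u)\<^sup>2 = 1" using nu by (metis cmod_power2 power_one)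
  ultimately have "Re u = 0" "(Im u)\<^sup>2 = 1" by (simp_all add: power2_eq_square algebra_simps)
  then have "u = \<i> \<or> u = - \<i>" by (auto simp: complex_eq_iff power2_eq_1_iff)
  moreover have "f z = of_real (Re z) * p + of_real (Im z) * (u * p)" for z
  proof -
    have "f z = f (Re z *\<^sub>R 1) + f (Im z *\<^sub>R \<i>)"
      using linear_add[OF \<open>linear f\<close>] complex_eq[of z]
      by (metis scaleR_conv_of_real mult.right_neutral mult.commute)
    then show ?thesis
      using linear_scale[OF \<open>linear f\<close>, of "Re z" 1] linear_scale[OF \<open>linear f\<close>, of "Im z" \<i>]
      by (simp add: scaleR_conv_of_real fi p_def)
  qed
  ultimately show ?thesis unfolding p_def[symmetric] by (auto simp: fun_eq_iff complex_eq_iff)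
qed

lemma isometry_cases:
  assumes "isometry g"
  obtains \<alpha> \<beta> where "cmod \<alpha> = 1" "g = (\<lambda>z. \<alpha> * z + \<beta>) \<or> g = (\<lambda>z. \<alpha> * cnj z + \<beta>)"
proof -
  define b where "b = g 0"
  define f where "f z = g z - b" for z
  have g: "g z = f z + b" for z by (simp add: f_def)
  have dist_f: "dist (f x) (f y) = dist x y" for x y
    using assms unfolding isometry_def f_def by (simp add: dist_norm)
  have "linear f" by (rule isometry_linear) (simp_all add: dist_f, simp add: f_def b_def)
  define p where "p = f 1"
  have "cmod p = 1" using dist_f[of 1 0] by (simp add: dist_norm p_def f_def b_def)
  moreover have "f = (\<lambda>z. p * z) \<or> f = (\<lambda>z. p * cnj z)"
    unfolding p_def by (rule linear_isometry_complex[OF \<open>linear f\<close> dist_f])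
  then have "g = (\<lambda>z. p * z + b) \<or> g = (\<lambda>z. p * cnj z + b)" by (auto simp: fun_eq_iff g)
  ultimately show ?thesis by (rule that)
qed

lemma isometry_add: "isometry g \<Longrightarrow> g (x + w) = g x + (g w - g 0)"
  by (erule isometry_cases) (auto simp: algebra_simps)

section \<open>The symmetry group of both tilings\<close>

definition point_map :: "bool \<Rightarrow> int \<Rightarrow> complex \<Rightarrow> complex" where
  "point_map s t z = cis12 (4 * t) * (if s then cnj z else z)"

definition point_act :: "bool \<Rightarrow> int \<Rightarrow> int \<Rightarrow> int" where
  "point_act s t n = (if s then 4 * t - n else 4 * t + n)"

lemma point_map_cis12: "point_map s t (cis12 n) = cis12 (point_act s t n)"
  unfolding point_map_def point_act_def by (simp add: cnj_cis12 flip: cis12_add)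

lemma point_map_add: "point_map s t (x + y) = point_map s t x + point_map s t y"
  unfolding point_map_def by (simp add: algebra_simps)

lemma point_map_diff: "point_map s t (x - y) = point_map s t x - point_map s t y"
  unfolding point_map_def by (simp add: algebra_simps)

lemma norm_point_map [simp]: "cmod (point_map s t z) = cmod z"
  unfolding point_map_def by (simp add: norm_mult)

lemma point_map_Lam: "x \<in> Lam \<Longrightarrow> point_map s t x \<in> Lam"
  unfolding point_map_def by (simp add: Lam_mult Lam_cnj cis12_mult4_in_eisenstein)

lemma point_map_point_map:
  "point_map s t (point_map s' t' z) = point_map (s \<noteq> s') (if s then t - t' else t + t') z"
  unfolding point_map_def
  by (cases s; cases s') (simp_all add: cnj_cis12 algebra_simps flip: cis12_add)

lemma point_map_inverse:
  "point_map s (if s then t else - t) (point_map s t z) = z"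
  "point_map s t (point_map s (if s then t else - t) z) = z"
  unfolding point_map_point_map by (simp_all add: point_map_def)

lemma point_map_add3: "point_map s (t + 3) z = - point_map s t z"
  using cis12_add12[of "4 * t"] by (simp add: point_map_def distrib_left)

definition lattice_sym :: "bool \<Rightarrow> int \<Rightarrow> complex \<Rightarrow> complex \<Rightarrow> complex" where
  "lattice_sym s t b z = point_map s t z + b"

definition lattice_syms :: "(complex \<Rightarrow> complex) set" where
  "lattice_syms = {lattice_sym s t b | s t b. b \<in> Lam}"

lemma lattice_syms_memI: "b \<in> Lam \<Longrightarrow> lattice_sym s t b \<in> lattice_syms"
  unfolding lattice_syms_def by blast

lemma isometry_lattice_sym: "isometry (lattice_sym s t b)"
  unfolding isometry_def lattice_sym_def dist_norm
  by (metis add_diff_cancel_right point_map_diff norm_point_map)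

lemma lattice_syms_subset_AutT:
  assumes "\<And>x s t. x \<in> X \<Longrightarrow> point_map s t x \<in> X"
    and "\<And>x b. x \<in> X \<Longrightarrow> b \<in> Lam \<Longrightarrow> x + b \<in> X"
  shows "lattice_syms \<subseteq> AutT X"
proof
  fix g assume "g \<in> lattice_syms"
  then obtain s t b where g: "g = lattice_sym s t b" and "b \<in> Lam" unfolding lattice_syms_def by blast
  have "g ` X \<subseteq> X" unfolding g lattice_sym_def using assms \<open>b \<in> Lam\<close> by auto
  moreover have "X \<subseteq> g ` X"
  proof
    fix y assume "y \<in> X"
    define x where "x = point_map s (if s then t else - t) (y + - b)"
    have "x \<in> X" unfolding x_def using assms \<open>y \<in> X\<close> Lam_uminus[OF \<open>b \<in> Lam\<close>] by blast
    moreover have "g x = y" unfolding g lattice_sym_def x_def point_map_inverse by simp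
    ultimately show "y \<in> g ` X" by blast
  qed
  ultimately show "g \<in> AutT X" unfolding AutT_def using isometry_lattice_sym g by blast
qed

lemma isometry_eq_lattice_sym:
  assumes "isometry g" "g (complex_of_real dd) - g 0 \<in> Lam"
  shows "\<exists>s t. g = lattice_sym s t (g 0)"
proof -
  obtain \<alpha> \<beta> where "cmod \<alpha> = 1" and g: "g = (\<lambda>z. \<alpha> * z + \<beta>) \<or> g = (\<lambda>z. \<alpha> * cnj z + \<beta>)"
    using isometry_cases[OF assms(1)] by blast
  moreover have "g (complex_of_real dd) - g 0 = \<alpha> * complex_of_real dd" using g by auto
  ultimately have "\<alpha> * complex_of_real dd \<in> Lam" "cmod (\<alpha> * complex_of_real dd) = dd"
    using assms(2) dd_pos by (auto simp: norm_mult)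
  then obtain t where "\<alpha> * complex_of_real dd = complex_of_real dd * cis12 (4 * t)"
    using Lam_norm_eq_dd by blast
  then have "\<alpha> = cis12 (4 * t)" using dd_pos by (simp add: mult.commute)
  then have "g = lattice_sym False t (g 0) \<or> g = lattice_sym True t (g 0)"
    using g by (auto simp: fun_eq_iff lattice_sym_def point_map_def)
  then show ?thesis by blast
qed

lemma AutS_eq: "AutS = lattice_syms"
proof
  show "AutS \<subseteq> lattice_syms"
  proof
    fix g assume "g \<in> AutS"
    then have "isometry g" "g ` Lam = Lam" unfolding AutS_def AutT_def by auto
    then have "g 0 \<in> Lam" "g (complex_of_real dd) \<in> Lam" by auto
    then show "g \<in> lattice_syms"
      using isometry_eq_lattice_sym[OF \<open>isometry g\<close> Lam_diff] unfolding lattice_syms_def by blast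
  qed
  show "lattice_syms \<subseteq> AutS"
    unfolding AutS_def by (rule lattice_syms_subset_AutT) (simp_all add: point_map_Lam Lam_add)
qed

lemma V8_iff: "x \<in> V8 \<longleftrightarrow> (\<exists>c\<in>Lam. \<exists>k. x = c + cis12 (2 * k + 1))"
proof
  assume "x \<in> V8"
  then obtain c and k :: nat where "c \<in> Lam" "x = c + cis ((2 * real k + 1) * pi / 12)"
    unfolding V8_def by blast
  then have "c \<in> Lam" "x = c + cis12 (2 * int k + 1)" by (simp_all add: cis12_def)
  then show "\<exists>c\<in>Lam. \<exists>k. x = c + cis12 (2 * k + 1)" by blast
next
  assume "\<exists>c\<in>Lam. \<exists>k. x = c + cis12 (2 * k + 1)"
  then obtain c k where "c \<in> Lam" and x: "x = c + cis12 (2 * k + 1)" by blast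
  have "cis12 (2 * k + 1) = cis12 (2 * (k mod 12) + 1)" by (rule cis12_even_mod12)
  then have "x = c + cis ((2 * real (nat (k mod 12)) + 1) * pi / 12)" unfolding x by (simp add: cis12_def)
  moreover have "nat (k mod 12) < 12" by simp
  ultimately show "x \<in> V8" unfolding V8_def using \<open>c \<in> Lam\<close> by blast
qed

lemma cis12_odd_in_V8: "cis12 (2 * j + 1) \<in> V8"
  unfolding V8_iff by (rule bexI[of _ 0]) auto

lemma V8_point_map: "x \<in> V8 \<Longrightarrow> point_map s t x \<in> V8"
proof -
  assume "x \<in> V8"
  then obtain c k where "c \<in> Lam" "x = c + cis12 (2 * k + 1)" unfolding V8_iff by blast
  moreover have "point_act s t (2 * k + 1) = 2 * (if s then 2 * t - k - 1 else 2 * t + k) + 1"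
    unfolding point_act_def by simp
  ultimately show ?thesis unfolding V8_iff
    by (metis point_map_add point_map_cis12 point_map_Lam)
qed

lemma V8_add_Lam: "x \<in> V8 \<Longrightarrow> b \<in> Lam \<Longrightarrow> x + b \<in> V8"
  unfolding V8_iff by (metis Lam_add add.assoc add.commute)

lemma dist_V8_Lam: "x \<in> V8 \<Longrightarrow> c \<in> Lam \<Longrightarrow> 9 / 10 \<le> cmod (x - c)"
proof -
  assume "x \<in> V8" "c \<in> Lam"
  then obtain c' k where "c' \<in> Lam" and x: "x = c' + cis12 (2 * k + 1)" unfolding V8_iff by blast
  show ?thesis
  proof (cases "c' = c")
    case False
    then have "19 / 10 \<le> cmod (c' - c)"
      using Lam_norm_ge[OF Lam_diff[OF \<open>c' \<in> Lam\<close> \<open>c \<in> Lam\<close>]] dd_ge by simp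
    moreover have "cmod (c' - c) \<le> cmod (x - c) + 1"
      using norm_triangle_ineq4[of "x - c" "cis12 (2 * k + 1)"] unfolding x by simp
    ultimately show ?thesis by linarith
  qed (simp add: x)
qed

lemma V8_translation_far:
  assumes "\<forall>v\<in>V8. v + w \<in> V8"
  shows "81 / 100 \<le> (cmod (cis12 (2 * j + 1) + w))\<^sup>2"
    "81 / 100 \<le> (cmod (cis12 (2 * j + 1) + w + complex_of_real dd))\<^sup>2"
proof -
  have x: "cis12 (2 * j + 1) + w \<in> V8" using assms cis12_odd_in_V8 by blast
  have "9 / 10 \<le> cmod (cis12 (2 * j + 1) + w - 0)"
    "9 / 10 \<le> cmod (cis12 (2 * j + 1) + w - (- complex_of_real dd))"
    using dist_V8_Lam[OF x Lam_0] dist_V8_Lam[OF x Lam_uminus[OF dd_in_Lam]] .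
  then have "(9 / 10)\<^sup>2 \<le> (cmod (cis12 (2 * j + 1) + w))\<^sup>2"
    "(9 / 10)\<^sup>2 \<le> (cmod (cis12 (2 * j + 1) + w + complex_of_real dd))\<^sup>2"
    by (simp_all add: power_mono)
  then show "81 / 100 \<le> (cmod (cis12 (2 * j + 1) + w))\<^sup>2"
    "81 / 100 \<le> (cmod (cis12 (2 * j + 1) + w + complex_of_real dd))\<^sup>2"
    by (simp_all add: power2_eq_square)
qed

lemma V8_translation_residue:
  assumes transl: "\<forall>v\<in>V8. v + (cis12 (2 * k + 1) - cis12 1) \<in> V8" and "0 \<le> k" "k < 12"
  shows "k = 0 \<or> k = 5"
proof -
  have e13: "cis12 (2 * j + 1) + (cis12 (2 * k + 1) - cis12 1) =
      cis12 (2 * j + 1) + cis12 (2 * k + 1) + cis12 13" for j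
    using cis12_add12[of 1] by simp
  have em1: "cis12 (2 * j + 1) + cis12 (2 * k + 1) + cis12 13 + complex_of_real dd =
      cis12 (2 * j + 1) + cis12 (2 * k + 1) + cis12 (- 1)" for j
    using cis12_add12[of 1] by (simp add: dd_eq_cis12)
  have far: "81 / 100 \<le> (cmod (cis12 (2 * j + 1) + cis12 (2 * k + 1) + cis12 13))\<^sup>2"
    "81 / 100 \<le> (cmod (cis12 (2 * j + 1) + cis12 (2 * k + 1) + cis12 (- 1)))\<^sup>2" for j
    using V8_translation_far[OF transl, of j] unfolding e13 em1 .
  note sum3_simps = norm_cis12_sum3_sq Re_cis12_uminus Re_cis12_values
  show ?thesis
  proof (rule ccontr)
    assume "\<not> (k = 0 \<or> k = 5)"
    with \<open>0 \<le> k\<close> \<open>k < 12\<close> have "k \<in> {1, 2, 3, 4, 6, 7, 8, 9, 10, 11}" by simp presburger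
    \<comment> \<open>in each case a translated vertex comes within \<open>9 / 10\<close> of the centre \<open>0\<close> or \<open>- dd\<close>\<close>
    then show False
    proof (elim insertE emptyE)
      assume "k = 1" then show False using far(1)[of 9] sqrt3_bounds by (simp add: sum3_simps)
    next
      assume "k = 2" then show False using far(1)[of 10] by (simp add: sum3_simps)
    next
      assume "k = 3" then show False using far(2)[of 7] by (simp add: sum3_simps)
    next
      assume "k = 4" then show False using far(2)[of 7] sqrt3_bounds by (simp add: sum3_simps)
    next
      assume "k = 6" then show False using far(2)[of 2] sqrt3_bounds by (simp add: sum3_simps)
    next
      assume "k = 7" then show False using far(2)[of 3] by (simp add: sum3_simps)
    next
      assume "k = 8" then show False using far(2)[of 3] sqrt3_bounds by (simp add: sum3_simps)
    next
      assume "k = 9" then show False using far(1)[of 1] sqrt3_bounds by (simp add: sum3_simps)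
    next
      assume "k = 10" then show False using far(1)[of 2] by (simp add: sum3_simps)
    next
      assume "k = 11" then show False using far(1)[of 2] sqrt3_bounds by (simp add: sum3_simps)
    qed
  qed
qed

lemma V8_translation_in_Lam:
  assumes transl: "\<forall>v\<in>V8. v + w \<in> V8"
  shows "w \<in> Lam"
proof -
  have "cis12 1 + w \<in> V8" using transl cis12_odd_in_V8[of 0] by simp
  then obtain c k where "c \<in> Lam" and ck: "cis12 1 + w = c + cis12 (2 * k + 1)"
    unfolding V8_iff by blast
  define k' where "k' = k mod 12"
  have "cis12 (2 * k + 1) = cis12 (2 * k' + 1)" unfolding k'_def by (rule cis12_even_mod12)
  then have w: "w = c + (cis12 (2 * k' + 1) - cis12 1)" using ck by (simp add: algebra_simps)
  have "\<forall>v\<in>V8. v + (cis12 (2 * k' + 1) - cis12 1) \<in> V8"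
  proof
    fix v assume "v \<in> V8"
    then have "v + - c + w \<in> V8" using transl V8_add_Lam Lam_uminus \<open>c \<in> Lam\<close> by blast
    then show "v + (cis12 (2 * k' + 1) - cis12 1) \<in> V8" by (simp add: w algebra_simps)
  qed
  moreover have "0 \<le> k'" "k' < 12" unfolding k'_def by simp_all
  ultimately have "k' = 0 \<or> k' = 5" by (rule V8_translation_residue)
  moreover have "cis12 (2 * 5 + 1) - cis12 1 = - complex_of_real dd"
    using cis12_add12[of "-1"] by (simp add: dd_eq_cis12)
  ultimately have "cis12 (2 * k' + 1) - cis12 1 \<in> Lam"
    using Lam_uminus[OF dd_in_Lam] by auto
  then show ?thesis unfolding w using Lam_add \<open>c \<in> Lam\<close> by blast
qed

lemma Aut8_eq: "Aut8 = lattice_syms"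
proof
  show "Aut8 \<subseteq> lattice_syms"
  proof
    fix g assume "g \<in> Aut8"
    then have iso: "isometry g" and im: "g ` V8 = V8" unfolding Aut8_def AutT_def by auto
    have "\<forall>v\<in>V8. v + (g (complex_of_real dd) - g 0) \<in> V8"
    proof
      fix v assume "v \<in> V8"
      then obtain x where "x \<in> V8" "v = g x" using im by blast
      then show "v + (g (complex_of_real dd) - g 0) \<in> V8"
        using V8_add_Lam[OF \<open>x \<in> V8\<close> dd_in_Lam] im isometry_add[OF iso] by (metis imageI)
    qed
    then obtain s t where g: "g = lattice_sym s t (g 0)"
      using isometry_eq_lattice_sym[OF iso V8_translation_in_Lam] by blast
    have "\<forall>v\<in>V8. v + g 0 \<in> V8"
    proof
      fix v assume "v \<in> V8"
      then have "g (point_map s (if s then t else - t) v) \<in> V8" using V8_point_map im by blast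
      then show "v + g 0 \<in> V8" by (subst (asm) g) (simp add: lattice_sym_def point_map_inverse)
    qed
    then have "g 0 \<in> Lam" by (rule V8_translation_in_Lam)
    then show "g \<in> lattice_syms" unfolding lattice_syms_def using g by blast
  qed
  show "lattice_syms \<subseteq> Aut8"
    unfolding Aut8_def by (rule lattice_syms_subset_AutT) (simp_all add: V8_point_map V8_add_Lam)
qed

section \<open>The normaliser of \<open>K\<close> and its orbits\<close>

definition transl_vectors :: "(complex \<Rightarrow> complex) set \<Rightarrow> complex set" where
  "transl_vectors K = {w. (\<lambda>z. z + w) \<in> K}"

definition point_stab :: "(complex \<Rightarrow> complex) set \<Rightarrow> (bool \<times> int) set" where
  "point_stab K = {(s, t). point_map s t ` transl_vectors K = transl_vectors K}"

definition lattice_normaliser :: "(complex \<Rightarrow> complex) set \<Rightarrow> (complex \<Rightarrow> complex) set" where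
  "lattice_normaliser K = {lattice_sym s t b | s t b. b \<in> Lam \<and> (s, t) \<in> point_stab K}"

lemma lattice_normaliser_memI:
  "b \<in> Lam \<Longrightarrow> (s, t) \<in> point_stab K \<Longrightarrow> lattice_sym s t b \<in> lattice_normaliser K"
  unfolding lattice_normaliser_def by blast

lemma lattice_sym_normalises_iff:
  assumes "\<forall>k\<in>K. \<exists>w. k = (\<lambda>z. z + w)"
  shows "(\<lambda>k. lattice_sym s t b \<circ> k) ` K = (\<lambda>k. k \<circ> lattice_sym s t b) ` K
    \<longleftrightarrow> (s, t) \<in> point_stab K"
proof -
  let ?T = "\<lambda>w z. z + w :: complex"
  let ?L = "transl_vectors K"
  let ?U = "\<lambda>w. ?T w \<circ> lattice_sym s t b"
  have K: "K = ?T ` ?L" using assms unfolding transl_vectors_def by auto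
  have "inj ?U" by (rule injI) (metis comp_apply add_left_cancel)
  have "(\<lambda>k. lattice_sym s t b \<circ> k) ` K = (\<lambda>w. lattice_sym s t b \<circ> ?T w) ` ?L"
    by (subst K) (simp add: image_image)
  also have "(\<lambda>w. lattice_sym s t b \<circ> ?T w) = ?U \<circ> point_map s t"
    by (simp add: fun_eq_iff lattice_sym_def point_map_add algebra_simps)
  finally have "(\<lambda>k. lattice_sym s t b \<circ> k) ` K = ?U ` point_map s t ` ?L"
    by (simp only: image_comp)
  moreover have "(\<lambda>k. k \<circ> lattice_sym s t b) ` K = ?U ` ?L"
    by (subst K) (simp add: image_image)
  ultimately have "(\<lambda>k. lattice_sym s t b \<circ> k) ` K = (\<lambda>k. k \<circ> lattice_sym s t b) ` K
      \<longleftrightarrow> ?U ` point_map s t ` ?L = ?U ` ?L"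
    by (simp only:)
  also have "\<dots> \<longleftrightarrow> point_map s t ` ?L = ?L" by (rule inj_image_eq_iff[OF \<open>inj ?U\<close>])
  finally show ?thesis by (simp add: point_stab_def)
qed

lemma normaliser_lattice_syms:
  assumes "\<forall>k\<in>K. \<exists>w. k = (\<lambda>z. z + w)"
  shows "normaliser lattice_syms K = lattice_normaliser K"
proof (intro equalityI subsetI)
  fix g assume "g \<in> normaliser lattice_syms K"
  then obtain s t b where g: "g = lattice_sym s t b" "b \<in> Lam"
    and "(\<lambda>k. g \<circ> k) ` K = (\<lambda>k. k \<circ> g) ` K"
    unfolding normaliser_def lattice_syms_def by blast
  then have "(s, t) \<in> point_stab K" using lattice_sym_normalises_iff[OF assms] by simp
  with g show "g \<in> lattice_normaliser K" by (simp add: lattice_normaliser_memI)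
next
  fix g assume "g \<in> lattice_normaliser K"
  then obtain s t b where g: "g = lattice_sym s t b" "b \<in> Lam" "(s, t) \<in> point_stab K"
    unfolding lattice_normaliser_def by blast
  then have "(\<lambda>k. g \<circ> k) ` K = (\<lambda>k. k \<circ> g) ` K" using lattice_sym_normalises_iff[OF assms] by simp
  with g show "g \<in> normaliser lattice_syms K"
    unfolding normaliser_def by (simp add: lattice_syms_memI)
qed

lemma point_stab_add3:
  assumes "\<forall>w. (\<lambda>z. z + w) \<in> K \<longrightarrow> (\<lambda>z. z - w) \<in> K"
  shows "(s, t + 3) \<in> point_stab K \<longleftrightarrow> (s, t) \<in> point_stab K"
proof -
  let ?L = "transl_vectors K"
  have neg: "- w \<in> ?L" if "w \<in> ?L" for w
    using assms that unfolding transl_vectors_def by simp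
  have uminus_L: "uminus ` ?L = ?L"
  proof
    show "uminus ` ?L \<subseteq> ?L" using neg by blast
    show "?L \<subseteq> uminus ` ?L"
    proof
      fix w assume "w \<in> ?L"
      then have "- (- w) \<in> uminus ` ?L" using neg by blast
      then show "w \<in> uminus ` ?L" by simp
    qed
  qed
  have uminus_iff: "uminus ` A = ?L \<longleftrightarrow> A = ?L" for A :: "complex set"
  proof
    assume "uminus ` A = ?L"
    then have "uminus ` uminus ` A = uminus ` ?L" by simp
    then show "A = ?L" by (simp add: image_image uminus_L)
  qed (simp add: uminus_L)
  have "(s, t + 3) \<in> point_stab K \<longleftrightarrow> point_map s (t + 3) ` ?L = ?L"
    by (simp add: point_stab_def)
  also have "point_map s (t + 3) ` ?L = uminus ` point_map s t ` ?L"
    by (simp add: point_map_add3 image_image)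
  also have "uminus ` point_map s t ` ?L = ?L \<longleftrightarrow> point_map s t ` ?L = ?L"
    by fact
  finally show ?thesis by (simp add: point_stab_def)
qed

lemma lattice_sym_comp:
  "lattice_sym s t b \<circ> lattice_sym s' t' b' =
     lattice_sym (s \<noteq> s') (if s then t - t' else t + t') (point_map s t b' + b)"
  unfolding lattice_sym_def by (simp add: fun_eq_iff point_map_add point_map_point_map)

lemma lattice_normaliser_id: "id \<in> lattice_normaliser K"
proof -
  have "(False, 0) \<in> point_stab K" by (simp add: point_stab_def point_map_def)
  then have "lattice_sym False 0 0 \<in> lattice_normaliser K"
    by (rule lattice_normaliser_memI[OF Lam_0])
  moreover have "lattice_sym False 0 0 = id" by (simp add: fun_eq_iff lattice_sym_def point_map_def)
  ultimately show ?thesis by simp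
qed

lemma lattice_normaliser_comp:
  assumes "g \<in> lattice_normaliser K" "h \<in> lattice_normaliser K"
  shows "g \<circ> h \<in> lattice_normaliser K"
proof -
  obtain s t b s' t' b' where g: "g = lattice_sym s t b" "b \<in> Lam" "(s, t) \<in> point_stab K"
    and h: "h = lattice_sym s' t' b'" "b' \<in> Lam" "(s', t') \<in> point_stab K"
    using assms unfolding lattice_normaliser_def by blast
  have "point_map (s \<noteq> s') (if s then t - t' else t + t') ` transl_vectors K =
      point_map s t ` point_map s' t' ` transl_vectors K"
    by (simp add: image_image point_map_point_map)
  then have "(s \<noteq> s', if s then t - t' else t + t') \<in> point_stab K"
    using g(3) h(3) by (simp add: point_stab_def)
  moreover have "point_map s t b' + b \<in> Lam" using g(2) h(2) by (simp add: point_map_Lam Lam_add)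
  ultimately show ?thesis unfolding g(1) h(1) lattice_sym_comp by (rule lattice_normaliser_memI[rotated])
qed

lemma lattice_normaliser_inverse:
  assumes "g \<in> lattice_normaliser K"
  shows "\<exists>h\<in>lattice_normaliser K. h \<circ> g = id"
proof -
  obtain s t b where g: "g = lattice_sym s t b" "b \<in> Lam" "(s, t) \<in> point_stab K"
    using assms unfolding lattice_normaliser_def by blast
  define t' where "t' = (if s then t else - t)"
  from g(3) have "point_map s t ` transl_vectors K = transl_vectors K" by (simp add: point_stab_def)
  then have "point_map s t' ` transl_vectors K = point_map s t' ` point_map s t ` transl_vectors K"
    by simp
  also have "\<dots> = transl_vectors K" by (simp add: image_image t'_def point_map_inverse)
  finally have "(s, t') \<in> point_stab K" by (simp add: point_stab_def)
  moreover have "- point_map s t' b \<in> Lam" using g(2) by (simp add: point_map_Lam Lam_uminus)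
  ultimately have "lattice_sym s t' (- point_map s t' b) \<in> lattice_normaliser K"
    by (rule lattice_normaliser_memI[rotated])
  moreover have "lattice_sym s t' (- point_map s t' b) \<circ> g = id"
    unfolding g(1) t'_def by (simp add: fun_eq_iff lattice_sym_def point_map_add point_map_inverse)
  ultimately show ?thesis by blast
qed

definition orbit :: "('a \<Rightarrow> 'a) set \<Rightarrow> 'a set \<Rightarrow> 'a set set" where
  "orbit N e = (\<lambda>g. g ` e) ` N"

lemma orbit_eq_iff:
  assumes "id \<in> N" "\<And>g h. g \<in> N \<Longrightarrow> h \<in> N \<Longrightarrow> g \<circ> h \<in> N"
    and "\<And>g. g \<in> N \<Longrightarrow> \<exists>h\<in>N. h \<circ> g = id"
  shows "orbit N e = orbit N e' \<longleftrightarrow> (\<exists>g\<in>N. e' = g ` e)"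
proof
  assume "orbit N e = orbit N e'"
  moreover have "e' \<in> orbit N e'" unfolding orbit_def by (rule rev_image_eqI[OF assms(1)]) simp
  ultimately have "e' \<in> orbit N e" by simp
  then show "\<exists>g\<in>N. e' = g ` e" by (simp only: orbit_def image_iff)
next
  have sub: "orbit N (g ` e) \<subseteq> orbit N e" if "g \<in> N" for g e
  proof
    fix x assume "x \<in> orbit N (g ` e)"
    then obtain h where "h \<in> N" "x = h ` g ` e" by (auto simp only: orbit_def image_iff)
    then have "x = (h \<circ> g) ` e" "h \<circ> g \<in> N" using assms(2) that by (simp_all add: image_comp)
    then show "x \<in> orbit N e" unfolding orbit_def by (rule rev_image_eqI[rotated])
  qed
  assume "\<exists>g\<in>N. e' = g ` e"
  then obtain g h where "g \<in> N" "e' = g ` e" "h \<in> N" "h \<circ> g = id" using assms(3) by blast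
  then have "e = h ` e'" by (simp add: image_comp)
  have "orbit N e' \<subseteq> orbit N e" using sub[OF \<open>g \<in> N\<close>, of e] \<open>e' = g ` e\<close> by simp
  moreover have "orbit N e \<subseteq> orbit N e'" using sub[OF \<open>h \<in> N\<close>, of e'] \<open>e = h ` e'\<close> by simp
  ultimately show "orbit N e = orbit N e'" by (rule antisym[rotated])
qed

lemma card_image_eq_if_same_fibres:
  assumes "\<And>i j. i \<in> I \<Longrightarrow> j \<in> I \<Longrightarrow> f i = f j \<longleftrightarrow> g i = g j"
  shows "card (f ` I) = card (g ` I)"
proof -
  let ?h = "\<lambda>x. g (inv_into I f x)"
  have h: "?h (f i) = g i" if "i \<in> I" for i
  proof -
    have "inv_into I f (f i) \<in> I" "f (inv_into I f (f i)) = f i"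
      using that by (simp_all add: inv_into_into f_inv_into_f)
    then show ?thesis using assms[of "inv_into I f (f i)" i] that by simp
  qed
  have "inj_on ?h (f ` I)"
  proof (rule inj_onI)
    fix x y assume "x \<in> f ` I" "y \<in> f ` I" "?h x = ?h y"
    then obtain i j where "i \<in> I" "j \<in> I" "x = f i" "y = f j" "g i = g j" using h by auto
    then show "x = y" using assms by simp
  qed
  moreover have "?h ` f ` I = g ` I" using h by (simp add: image_image)
  ultimately have "bij_betw ?h (f ` I) (g ` I)" by (simp add: bij_betw_def)
  then show ?thesis by (rule bij_betw_same_card)
qed

section \<open>Edge orbits\<close>

text \<open>\<open>side c n\<close> is the side of the 12-gon centred at \<open>c\<close> whose midpoint lies in direction
  \<open>cis12 n\<close> from \<open>c\<close>; \<open>bond c n\<close> is the edge of \<open>E\<^sub>8\<^sup>#\<close> leaving \<open>c\<close> in direction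
  \<open>cis12 n\<close>.\<close>

definition side :: "complex \<Rightarrow> int \<Rightarrow> complex set" where
  "side c n = {c + cis12 (n - 1), c + cis12 (n + 1)}"

definition bond :: "complex \<Rightarrow> int \<Rightarrow> complex set" where
  "bond c n = {c, c + complex_of_real dd * cis12 n}"

lemma Edges8_eq: "Edges8 = {side c (2 * k) | c k. c \<in> Lam}"
proof (intro equalityI subsetI)
  fix e assume "e \<in> Edges8"
  then obtain c and k :: nat where "c \<in> Lam"
    and e: "e = {c + cis ((2 * real k + 1) * pi / 12), c + cis ((2 * real k + 3) * pi / 12)}"
    unfolding Edges8_def by blast
  have "e = side c (2 * (int k + 1))" unfolding e side_def by (simp add: cis12_def algebra_simps)
  with \<open>c \<in> Lam\<close> show "e \<in> {side c (2 * k) | c k. c \<in> Lam}" by blast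
next
  fix e assume "e \<in> {side c (2 * k) | c k. c \<in> Lam}"
  then obtain c k where "c \<in> Lam" and e: "e = side c (2 * k)" by blast
  define k' where "k' = nat ((k - 1) mod 12)"
  have "e = {c + cis12 (2 * (k - 1) + 1), c + cis12 (2 * (k - 1) + 3)}"
    unfolding e side_def by (simp add: algebra_simps)
  also have "\<dots> = {c + cis ((2 * real k' + 1) * pi / 12), c + cis ((2 * real k' + 3) * pi / 12)}"
    unfolding k'_def cis12_even_mod12[of "k - 1" 1] cis12_even_mod12[of "k - 1" 3]
    by (simp add: cis12_def)
  finally show "e \<in> Edges8" unfolding Edges8_def using \<open>c \<in> Lam\<close> k'_def by fastforce
qed

lemma EdgesS_eq: "EdgesS = {bond c (4 * r) | c r. c \<in> Lam}"
proof (intro equalityI subsetI)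
  fix e assume "e \<in> EdgesS"
  then obtain x y where "x \<in> Lam" "y \<in> Lam" "dist x y = dd" and e: "e = {x, y}"
    unfolding EdgesS_def by blast
  then have "y - x \<in> Lam" "cmod (y - x) = dd" by (simp_all add: Lam_diff dist_norm norm_minus_commute)
  then obtain r where "y - x = complex_of_real dd * cis12 (4 * r)" using Lam_norm_eq_dd by blast
  then have "e = bond x (4 * r)" unfolding e bond_def by (simp add: algebra_simps)
  with \<open>x \<in> Lam\<close> show "e \<in> {bond c (4 * r) | c r. c \<in> Lam}" by blast
next
  fix e assume "e \<in> {bond c (4 * r) | c r. c \<in> Lam}"
  then obtain c r where "c \<in> Lam" and e: "e = bond c (4 * r)" by blast
  have "cis12 (4 * r) * complex_of_real dd \<in> Lam"
    by (rule Lam_mult[OF cis12_mult4_in_eisenstein dd_in_Lam])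
  then have "c + complex_of_real dd * cis12 (4 * r) \<in> Lam"
    using \<open>c \<in> Lam\<close> by (simp add: Lam_add mult.commute)
  moreover have "dist c (c + complex_of_real dd * cis12 (4 * r)) = dd"
    using dd_pos by (simp add: dist_norm norm_mult)
  ultimately show "e \<in> EdgesS" unfolding EdgesS_def e bond_def using \<open>c \<in> Lam\<close> by blast
qed

lemma lattice_sym_add_cis12:
  "lattice_sym s t b (c + cis12 m) = lattice_sym s t b c + cis12 (point_act s t m)"
  by (simp add: lattice_sym_def point_map_add point_map_cis12)

lemma lattice_sym_side:
  "lattice_sym s t b ` side c n = side (lattice_sym s t b c) (point_act s t n)"
proof (cases s)
  case True
  then have "point_act s t (n - 1) = point_act s t n + 1" "point_act s t (n + 1) = point_act s t n - 1"
    by (simp_all add: point_act_def)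
  then show ?thesis by (simp add: side_def lattice_sym_add_cis12 insert_commute)
next
  case False
  then have "point_act s t (n - 1) = point_act s t n - 1" "point_act s t (n + 1) = point_act s t n + 1"
    by (simp_all add: point_act_def)
  then show ?thesis by (simp add: side_def lattice_sym_add_cis12)
qed

lemma lattice_sym_bond:
  "lattice_sym s t b ` bond c n = bond (lattice_sym s t b c) (point_act s t n)"
proof -
  have "point_map s t (complex_of_real dd * cis12 n) = complex_of_real dd * cis12 (point_act s t n)"
    unfolding point_map_def point_act_def by (simp add: cnj_cis12 algebra_simps flip: cis12_add)
  then show ?thesis unfolding bond_def lattice_sym_def by (simp add: point_map_add algebra_simps)
qed

lemma side_cong: "cis12 n = cis12 n' \<Longrightarrow> side c n = side c n'"
proof -
  assume "cis12 n = cis12 n'"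
  moreover have "cis12 (m - 1) = cis12 m * cis12 (- 1)" "cis12 (m + 1) = cis12 m * cis12 1" for m
    by (simp_all flip: cis12_add)
  ultimately show ?thesis by (simp add: side_def)
qed

lemma bond_cong: "cis12 n = cis12 n' \<Longrightarrow> bond c n = bond c n'"
  by (simp add: bond_def)

lemma side_eq_side:
  assumes "side c n = side c' n'"
  shows "cis12 n' = cis12 n \<or> cis12 n' = - cis12 n"
proof -
  define d where "d = cis12 (- 1) - cis12 1"
  have diff: "cis12 (m - 1) - cis12 (m + 1) = cis12 m * d" for m
    by (simp add: d_def right_diff_distrib flip: cis12_add)
  have "d \<noteq> 0" by (simp add: d_def cis12_eq_iff)
  from assms consider
      "c + cis12 (n - 1) = c' + cis12 (n' - 1)" "c + cis12 (n + 1) = c' + cis12 (n' + 1)"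
    | "c + cis12 (n - 1) = c' + cis12 (n' + 1)" "c + cis12 (n + 1) = c' + cis12 (n' - 1)"
    unfolding side_def by (auto simp: doubleton_eq_iff)
  then show ?thesis
  proof cases
    case 1
    have "cis12 n * d = (c + cis12 (n - 1)) - (c + cis12 (n + 1))" by (simp add: diff)
    also have "\<dots> = (c' + cis12 (n' - 1)) - (c' + cis12 (n' + 1))" by (simp only: 1)
    also have "\<dots> = cis12 n' * d" by (simp add: diff)
    finally show ?thesis using \<open>d \<noteq> 0\<close> by simp
  next
    case 2
    have "cis12 n * d = (c + cis12 (n - 1)) - (c + cis12 (n + 1))" by (simp add: diff)
    also have "\<dots> = (c' + cis12 (n' + 1)) - (c' + cis12 (n' - 1))" by (simp only: 2)
    also have "\<dots> = - (cis12 (n' - 1) - cis12 (n' + 1))" by simp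
    also have "\<dots> = (- cis12 n') * d" by (simp add: diff)
    finally have "cis12 n = - cis12 n'" using \<open>d \<noteq> 0\<close> by (rule mult_right_cancel[THEN iffD1, rotated])
    then show ?thesis by simp
  qed
qed

lemma bond_eq_bond:
  assumes "bond c n = bond c' n'"
  shows "cis12 n' = cis12 n \<or> cis12 n' = - cis12 n"
proof -
  have "complex_of_real dd \<noteq> 0" using dd_pos by simp
  from assms consider
      "c = c'" "c + complex_of_real dd * cis12 n = c' + complex_of_real dd * cis12 n'"
    | "c = c' + complex_of_real dd * cis12 n'" "c + complex_of_real dd * cis12 n = c'"
    unfolding bond_def by (auto simp: doubleton_eq_iff)
  then show ?thesis
  proof cases
    case 1
    then show ?thesis using \<open>complex_of_real dd \<noteq> 0\<close> by simp
  next
    case 2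
    then have "complex_of_real dd * (cis12 n' + cis12 n) = 0" by (simp add: algebra_simps)
    then show ?thesis using \<open>complex_of_real dd \<noteq> 0\<close> by (simp add: add_eq_0_iff)
  qed
qed

definition dir_rel :: "(bool \<times> int) set \<Rightarrow> int \<Rightarrow> int \<Rightarrow> bool" where
  "dir_rel P n n' \<longleftrightarrow> (\<exists>(s, t) \<in> P. cis12 n' = cis12 (point_act s t n))"

lemma dir_rel_add6:
  assumes P3: "\<And>s t. (s, t + 3) \<in> P \<longleftrightarrow> (s, t) \<in> P"
  shows "dir_rel P (n + 6) (n' + 6) \<longleftrightarrow> dir_rel P n n'"
proof -
  have shift: "cis12 (a + 6) = cis12 (b + 6) \<longleftrightarrow> cis12 a = cis12 b" for a b
    by (simp add: cis12_add)
  have act: "point_act s (if s then t + 3 else t) (n + 6) = point_act s t n + 6" for s t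
    by (simp add: point_act_def)
  have P: "(s, if s then t + 3 else t) \<in> P \<longleftrightarrow> (s, t) \<in> P" for s t
    using P3 by simp
  show ?thesis
  proof
    assume "dir_rel P (n + 6) (n' + 6)"
    then obtain s t where "(s, t) \<in> P" "cis12 (n' + 6) = cis12 (point_act s t (n + 6))"
      unfolding dir_rel_def by blast
    moreover define t0 where "t0 = (if s then t - 3 else t)"
    ultimately have "(s, t0) \<in> P" "cis12 (n' + 6) = cis12 (point_act s t0 n + 6)"
      using P[of s t0] act[of s t0] by (simp_all add: t0_def split: if_splits)
    then show "dir_rel P n n'" unfolding dir_rel_def shift by blast
  next
    assume "dir_rel P n n'"
    then obtain s t where "(s, t) \<in> P" "cis12 n' = cis12 (point_act s t n)"
      unfolding dir_rel_def by blast
    then have "(s, if s then t + 3 else t) \<in> P"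
      "cis12 (n' + 6) = cis12 (point_act s (if s then t + 3 else t) (n + 6))"
      using P act shift by simp_all
    then show "dir_rel P (n + 6) (n' + 6)" unfolding dir_rel_def by blast
  qed
qed

lemma dir_rel_4_dvd:
  assumes "dir_rel P n n'"
  shows "4 dvd n' \<longleftrightarrow> 4 dvd n"
proof -
  obtain s t where "cis12 n' = cis12 (point_act s t n)" using assms unfolding dir_rel_def by blast
  then have "n' mod 24 mod 4 = point_act s t n mod 24 mod 4" by (simp add: cis12_eq_iff)
  then have "n' mod 4 = point_act s t n mod 4" by (simp add: mod_mod_cancel)
  moreover have "4 dvd point_act s t n \<longleftrightarrow> 4 dvd n"
    using dvd_add_right_iff[of 4 "4 * t" n] dvd_diff_right_iff[of 4 "4 * t" n]
    by (simp add: point_act_def)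
  ultimately show ?thesis by (simp add: dvd_eq_mod_eq_0)
qed

lemma orbit_eq_iff_dir_rel:
  fixes F :: "complex \<Rightarrow> int \<Rightarrow> complex set"
  assumes P3: "\<And>s t. (s, t + 3) \<in> point_stab K \<longleftrightarrow> (s, t) \<in> point_stab K"
    and act: "\<And>s t b c n. lattice_sym s t b ` F c n = F (lattice_sym s t b c) (point_act s t n)"
    and cong: "\<And>c n n'. cis12 n = cis12 n' \<Longrightarrow> F c n = F c n'"
    and eq: "\<And>c c' n n'. F c n = F c' n' \<Longrightarrow> cis12 n' = cis12 n \<or> cis12 n' = - cis12 n"
    and "c \<in> Lam" "c' \<in> Lam"
  shows "orbit (lattice_normaliser K) (F c n) = orbit (lattice_normaliser K) (F c' n')
    \<longleftrightarrow> dir_rel (point_stab K) n n'"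
proof -
  let ?N = "lattice_normaliser K"
  have "orbit ?N (F c n) = orbit ?N (F c' n') \<longleftrightarrow> (\<exists>g\<in>?N. F c' n' = g ` F c n)"
    by (rule orbit_eq_iff[OF lattice_normaliser_id lattice_normaliser_comp lattice_normaliser_inverse])
  also have "\<dots> \<longleftrightarrow> dir_rel (point_stab K) n n'"
  proof
    assume "\<exists>g\<in>?N. F c' n' = g ` F c n"
    then obtain g where "g \<in> ?N" and g: "F c' n' = g ` F c n" by blast
    then obtain s t b where "g = lattice_sym s t b" "(s, t) \<in> point_stab K"
      unfolding lattice_normaliser_def by blast
    with g have "F (lattice_sym s t b c) (point_act s t n) = F c' n'" by (simp add: act)
    then have "cis12 n' = cis12 (point_act s t n) \<or> cis12 n' = - cis12 (point_act s t n)"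
      by (rule eq)
    \<comment> \<open>the reversed edge is reached through the half-turn \<open>t + 3\<close>, which lies in the normaliser\<close>
    moreover have "point_act s (t + 3) n = point_act s t n + 12" by (simp add: point_act_def)
    ultimately have "cis12 n' = cis12 (point_act s t n) \<or> cis12 n' = cis12 (point_act s (t + 3) n)"
      by (simp add: cis12_add12)
    moreover have "(s, t + 3) \<in> point_stab K" using P3 \<open>(s, t) \<in> point_stab K\<close> by simp
    ultimately show "dir_rel (point_stab K) n n'"
      unfolding dir_rel_def using \<open>(s, t) \<in> point_stab K\<close> by blast
  next
    assume "dir_rel (point_stab K) n n'"
    then obtain s t where "(s, t) \<in> point_stab K" and n': "cis12 n' = cis12 (point_act s t n)"
      unfolding dir_rel_def by blast
    define g where "g = lattice_sym s t (c' - point_map s t c)"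
    have "g \<in> ?N" unfolding g_def using \<open>(s, t) \<in> point_stab K\<close> \<open>c \<in> Lam\<close> \<open>c' \<in> Lam\<close>
      by (intro lattice_normaliser_memI Lam_diff point_map_Lam)
    moreover have "g ` F c n = F c' n'"
      unfolding g_def act using cong[OF n'[symmetric]] by (simp add: lattice_sym_def)
    ultimately show "\<exists>g\<in>?N. F c' n' = g ` F c n" by blast
  qed
  finally show ?thesis .
qed

text \<open>A side in direction \<open>4 * r\<close> is shared by two 12-gons and crosses the bond in the same
  direction; a side in direction \<open>4 * r + 6\<close> borders a triangle and is matched with the bond a
  quarter turn away.\<close>

definition side_dir :: "int \<Rightarrow> bool \<Rightarrow> int" where
  "side_dir r p = 4 * r + (if p then 6 else 0)"

lemma Edges8_eq_side_dir: "Edges8 = (\<lambda>(c, r, p). side c (side_dir r p)) ` (Lam \<times> UNIV)"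
proof (intro equalityI subsetI)
  fix e assume "e \<in> Edges8"
  then obtain c k where "c \<in> Lam" and e: "e = side c (2 * k)" unfolding Edges8_eq by blast
  obtain r p where dk: "2 * k = side_dir r p"
  proof (cases "even k")
    case True
    then obtain r where "k = 2 * r" by (rule evenE)
    then show ?thesis using that[of r False] by (simp add: side_dir_def)
  next
    case False
    then obtain r where "k = 2 * r + 1" by (rule oddE)
    then show ?thesis using that[of "r - 1" True] by (simp add: side_dir_def algebra_simps)
  qed
  have "(c, r, p) \<in> Lam \<times> UNIV" using \<open>c \<in> Lam\<close> by simp
  then show "e \<in> (\<lambda>(c, r, p). side c (side_dir r p)) ` (Lam \<times> UNIV)"
    unfolding e dk by (rule rev_image_eqI) simp
next
  fix e assume "e \<in> (\<lambda>(c, r, p). side c (side_dir r p)) ` (Lam \<times> UNIV)"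
  then obtain c r p where "c \<in> Lam" and e: "e = side c (side_dir r p)" by auto
  have "side_dir r p = 2 * (2 * r + (if p then 3 else 0))" by (simp add: side_dir_def)
  then show "e \<in> Edges8" unfolding Edges8_eq e using \<open>c \<in> Lam\<close>
    by (intro CollectI exI[of _ c] exI[of _ "2 * r + (if p then 3 else 0)"]) simp
qed

lemma dir_rel_side_dir_iff:
  assumes P3: "\<And>s t. (s, t + 3) \<in> P \<longleftrightarrow> (s, t) \<in> P"
  shows "dir_rel P (side_dir r p) (side_dir r' p') \<longleftrightarrow> p = p' \<and> dir_rel P (4 * r) (4 * r')"
proof -
  have not_4_dvd: "\<not> 4 dvd 4 * a + (6 :: int)" for a
    using dvd_add_right_iff[of 4 "4 * a" 6] by simp
  show ?thesis
    using dir_rel_4_dvd[of P "4 * r" "4 * r' + 6"] dir_rel_4_dvd[of P "4 * r + 6" "4 * r'"]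
      not_4_dvd dir_rel_add6[OF P3, of "4 * r" "4 * r'"]
    by (cases p; cases p') (auto simp: side_dir_def)
qed

lemma card_Edges8_orbits:
  assumes P3: "\<And>s t. (s, t + 3) \<in> point_stab K \<longleftrightarrow> (s, t) \<in> point_stab K"
  shows "card (orbit (lattice_normaliser K) ` Edges8) =
    2 * card (orbit (lattice_normaliser K) ` EdgesS)"
proof -
  let ?N = "lattice_normaliser K" and ?P = "point_stab K"
  let ?I = "Lam \<times> (UNIV :: (int \<times> bool) set)"
  define side_orb where "side_orb = (\<lambda>(c, r, p). orbit ?N (side c (side_dir r p)))"
  define bond_orb where "bond_orb = (\<lambda>(c, r, p :: bool). (orbit ?N (bond c (4 * r)), p))"
  have "side_orb i = side_orb j \<longleftrightarrow> bond_orb i = bond_orb j"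
    if ij: "i \<in> ?I" "j \<in> ?I" for i j
  proof -
    obtain c r p c' r' p' where i: "i = (c, r, p)" "c \<in> Lam" and j: "j = (c', r', p')" "c' \<in> Lam"
      using ij by (cases i rule: prod_cases3, cases j rule: prod_cases3) auto
    have "side_orb i = side_orb j \<longleftrightarrow> dir_rel ?P (side_dir r p) (side_dir r' p')"
      unfolding side_orb_def i j
      using orbit_eq_iff_dir_rel[OF P3 lattice_sym_side side_cong side_eq_side i(2) j(2)] by simp
    also have "\<dots> \<longleftrightarrow> p = p' \<and> dir_rel ?P (4 * r) (4 * r')"
      by (rule dir_rel_side_dir_iff[OF P3])
    also have "\<dots> \<longleftrightarrow> bond_orb i = bond_orb j"
      unfolding bond_orb_def i j
      using orbit_eq_iff_dir_rel[OF P3 lattice_sym_bond bond_cong bond_eq_bond i(2) j(2)] by auto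
    finally show ?thesis .
  qed
  then have "card (side_orb ` ?I) = card (bond_orb ` ?I)" by (rule card_image_eq_if_same_fibres)
  moreover have "side_orb ` ?I = orbit ?N ` Edges8"
    unfolding Edges8_eq_side_dir image_image side_orb_def by (simp add: case_prod_beta)
  moreover have "bond_orb ` ?I = orbit ?N ` EdgesS \<times> (UNIV :: bool set)"
  proof (intro equalityI subsetI)
    fix x assume "x \<in> bond_orb ` ?I"
    then obtain c r p where "c \<in> Lam" "x = (orbit ?N (bond c (4 * r)), p)"
      unfolding bond_orb_def by auto
    then show "x \<in> orbit ?N ` EdgesS \<times> (UNIV :: bool set)" unfolding EdgesS_eq by auto
  next
    fix x assume "x \<in> orbit ?N ` EdgesS \<times> (UNIV :: bool set)"
    then obtain c r p where "c \<in> Lam" and x: "x = (orbit ?N (bond c (4 * r)), p)"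
      unfolding EdgesS_eq by auto
    then have "(c, r, p) \<in> ?I" by simp
    then show "x \<in> bond_orb ` ?I" unfolding x bond_orb_def by (rule rev_image_eqI) simp
  qed
  ultimately show ?thesis by (simp add: card_cartesian_product)
qed

theorem lemma3p3:
  fixes K8 :: "(complex \<Rightarrow> complex) set" and m8 :: nat
  assumes "translation_lattice_group Aut8 K8"
    and "m8 > 0"
  shows "num_edge_orbits_quotient AutS EdgesS K8 = m8 \<longleftrightarrow>
         num_edge_orbits_quotient Aut8 Edges8 K8 = 2 * m8"
proof -
  have transl: "\<forall>k\<in>K8. \<exists>w. k = (\<lambda>z. z + w)"
    and inv: "\<forall>w. (\<lambda>z. z + w) \<in> K8 \<longrightarrow> (\<lambda>z. z - w) \<in> K8"
    using assms(1) unfolding translation_lattice_group_def by blast+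
  have "normaliser Aut8 K8 = lattice_normaliser K8" "normaliser AutS K8 = lattice_normaliser K8"
    unfolding Aut8_eq AutS_eq by (simp_all add: normaliser_lattice_syms[OF transl])
  then have "num_edge_orbits_quotient Aut8 Edges8 K8 = 2 * num_edge_orbits_quotient AutS EdgesS K8"
    unfolding num_edge_orbits_quotient_def edge_orbits_def
    using card_Edges8_orbits[OF point_stab_add3[OF inv]] by (simp add: orbit_def)
  \<comment> \<open>this holds for every such \<open>K8\<close>\<close>
  then show ?thesis by simp
qed

end
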